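(* Let $\epsilon>0$ be sufficiently small, and for $(\phi,\theta)$ spherical-polar coordinates on $S^2$ let $L_s(\phi,\theta)\in R(T^2,2)$ be as defined in the context, with $\nu=\epsilon\sin\phi$ and $D=\cos^2\nu+\sin^2\nu\sin^2\theta$. On the set $\{y\neq0\}=\{\phi\in(0,\pi),\ \theta\notin\{0,\pi\}\}$ the map $(\phi,\theta)\mapsto L_s(\phi,\theta)$ is injective and takes values in $P_4$. Moreover, writing $\hat a,\hat b$ for the unit vectors with $a=i\hat a\cdot\vec\sigma$, $b=i\hat b\cdot\vec\sigma$ in the normalized representative of $L_s(\phi,\theta)$: for $\theta\in(0,\pi)$, $$\hat a=(-\sin(\phi+\nu),-\cos(\phi+\nu),0),$$ $$\hat b=D^{-1}\Big(\cos^2\nu\cos^2\theta\sin(\phi+\nu)+\sin^2\theta\sin(\phi-\nu),\ \cos^2\nu\cos^2\theta\cos(\phi+\nu)+\sin^2\theta\cos(\phi-\nu),\ -\tfrac12\sin 2\nu\sin2\theta\Big),$$ and for $\theta\in(\pi,2\pi)$, $$\hat a=(\sin(\phi+\nu),\cos(\phi+\nu),0),$$ $$\hat b=D^{-1}\Big(-\cos^2\nu\cos^2\theta\sin(\phi+\nu)-\sin^2\theta\sin(\phi-\nu),\ -\cos^2\nu\cos^2\theta\cos(\phi+\nu)-\sin^2\theta\cos(\phi-\nu),\ -\tfrac12\sin 2\nu\sin2\theta\Big).$$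
   Context: Pauli matrices standard; $[A,B]=ABA^{-1}B^{-1}$. $R(T^2,2)$ is the space of tuples $(A,B,a,b)\in SU(2)^4$ with $\operatorname{tr}a=\operatorname{tr}b=0$ and $[A,B]ab=1$ modulo simultaneous conjugation; $\mu([(A,B,a,b)])=\tfrac12\operatorname{tr}[A,B]$; $P_4=\mu^{-1}([-1,1))$. Every class in $P_4$ has a unique (normalized) representative with $A=r\cos\alpha+i\sigma_x\sqrt{1-r^2}+i\sigma_z r\sin\alpha$, $B=\cos\beta+i\sigma_z\sin\beta$, $\alpha\in[0,2\pi]$, $\beta\in(0,\pi)$, $r\in[0,1)$. Cartesian coordinates on $S^2$: $(x,y,z)=(\sin\phi\cos\theta,\sin\phi\sin\theta,\cos\phi)$. Sphere Lagrangian: for small $\epsilon>0$, $\nu=\epsilon\sin\phi$, define $L_s(\phi,\theta)=[(A,B,a,b)]\in R(T^2,2)$ where $a=i\sigma_z$, $h=(\cos^2\nu+\sin^2\nu\sin^2\theta)^{-1/2}(i\sigma_x\cos\nu-i\sigma_z\sin\nu\sin\theta)$, $A=h(\cos\phi+i\sin\phi(\sigma_x\cos\theta+\sigma_y\sin\theta))$, $B=\cos\nu+i\sin\nu(\sigma_x\cos\theta+\sigma_y\sin\theta)$, $b=-ha^{-1}h^{-1}$. (This is the image of the perturbed character variety $R_\pi^\natural(S^1\times D^2,A_1)\cong S^2$ under restriction to the boundary twice-punctured torus.) *)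

theory Defs
  imports "HOL-Analysis.Analysis"
begin

type_synonym cmat = "complex^2^2"

definition mat2 :: "complex \<Rightarrow> complex \<Rightarrow> complex \<Rightarrow> complex \<Rightarrow> cmat" where
  "mat2 p q r s = (\<chi> i j. if i = 1 then (if j = 1 then p else q) else (if j = 1 then r else s))"

definition csc :: "complex \<Rightarrow> cmat \<Rightarrow> cmat" where
  "csc c M = (\<chi> i j. c * M$i$j)"

definition ctrans :: "cmat \<Rightarrow> cmat" where
  "ctrans M = (\<chi> i j. cnj (M$j$i))"

definition sx :: cmat where "sx = mat2 0 1 1 0"
definition sy :: cmat where "sy = mat2 0 (-\<i>) \<i> 0"
definition sz :: cmat where "sz = mat2 1 0 0 (-1)"

definition SU2 :: "cmat set" where
  "SU2 = {U. U ** ctrans U = mat 1 \<and> det U = 1}"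

definition su2_of :: "real \<Rightarrow> real \<Rightarrow> real \<Rightarrow> real \<Rightarrow> cmat" where
  "su2_of w x y z = csc (complex_of_real w) (mat 1)
      + csc \<i> (csc (complex_of_real x) sx + csc (complex_of_real y) sy + csc (complex_of_real z) sz)"

definition comm :: "cmat \<Rightarrow> cmat \<Rightarrow> cmat" where
  "comm A B = A ** B ** matrix_inv A ** matrix_inv B"

type_synonym tuple4 = "cmat \<times> cmat \<times> cmat \<times> cmat"

text \<open>Tuples representing points of R(T^2,2) (before quotienting by conjugation).\<close>
definition in_R :: "tuple4 \<Rightarrow> bool" where
  "in_R t = (case t of (A, B, a, b) \<Rightarrow>
     A \<in> SU2 \<and> B \<in> SU2 \<and> a \<in> SU2 \<and> b \<in> SU2 \<and> trace a = 0 \<and> trace b = 0 \<and>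
     comm A B ** a ** b = mat 1)"

definition conj_equiv :: "tuple4 \<Rightarrow> tuple4 \<Rightarrow> bool" where
  "conj_equiv t t' = (case t of (A, B, a, b) \<Rightarrow> case t' of (A', B', a', b') \<Rightarrow>
     (\<exists>g \<in> SU2. A' = g ** A ** matrix_inv g \<and> B' = g ** B ** matrix_inv g \<and>
                a' = g ** a ** matrix_inv g \<and> b' = g ** b ** matrix_inv g))"

text \<open>mu = (1/2) tr [A,B]  (real for SU(2); we take the real part).\<close>
definition mu :: "tuple4 \<Rightarrow> real" where
  "mu t = (case t of (A, B, a, b) \<Rightarrow> Re (trace (comm A B)) / 2)"

definition in_P4 :: "tuple4 \<Rightarrow> bool" where
  "in_P4 t = (in_R t \<and> -1 \<le> mu t \<and> mu t < 1)"

definition normalized :: "tuple4 \<Rightarrow> bool" where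
  "normalized t = (case t of (A, B, a, b) \<Rightarrow>
     (\<exists>\<alpha> \<beta> r. 0 \<le> \<alpha> \<and> \<alpha> \<le> 2*pi \<and> 0 < \<beta> \<and> \<beta> < pi \<and> 0 \<le> r \<and> r < 1 \<and>
        A = su2_of (r * cos \<alpha>) (sqrt (1 - r\<^sup>2)) 0 (r * sin \<alpha>) \<and>
        B = su2_of (cos \<beta>) 0 0 (sin \<beta>)))"

definition Ls :: "real \<Rightarrow> real \<Rightarrow> real \<Rightarrow> tuple4" where
  "Ls \<epsilon> \<phi> \<theta> = (let \<nu> = \<epsilon> * sin \<phi>;
       n = csc (complex_of_real (cos \<theta>)) sx + csc (complex_of_real (sin \<theta>)) sy;
       h = csc (complex_of_real (1 / sqrt ((cos \<nu>)\<^sup>2 + (sin \<nu>)\<^sup>2 * (sin \<theta>)\<^sup>2)))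
             (csc \<i> (csc (complex_of_real (cos \<nu>)) sx - csc (complex_of_real (sin \<nu> * sin \<theta>)) sz));
       A = h ** (csc (complex_of_real (cos \<phi>)) (mat 1) + csc (\<i> * complex_of_real (sin \<phi>)) n);
       B = csc (complex_of_real (cos \<nu>)) (mat 1) + csc (\<i> * complex_of_real (sin \<nu>)) n;
       a = csc \<i> sz;
       b = - (h ** matrix_inv a ** matrix_inv h)
     in (A, B, a, b))"

end

theory Submission
  imports Defs
begin

text \<open>
  In quaternion coordinates \<open>su2_of w x y z\<close> every ingredient of \<open>L_s(\<phi>,\<theta>)\<close> is an explicit
  unit quaternion. Conjugating by the rotation \<open>R_z(\<tau>) R_y(\<pi>/2) R_z(-\<theta>)\<close>, with
  \<open>\<tau> = \<plusminus>\<pi>/2 - (\<phi> + \<nu>)\<close>, turns \<open>B\<close> into \<open>e^{i\<nu>\<sigma>_z}\<close>, kills the \<open>\<sigma>_y\<close>-component of \<open>A\<close> and makes its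
  \<open>\<sigma>_x\<close>-component positive, i.e. produces the normalized representative and hence \<open>a\<close> and \<open>b\<close>.
  Normalized representatives are unique, because an element of SU(2) commuting with a
  normalized \<open>B\<close> and conjugating one normalized \<open>A\<close> into another is \<open>\<plusminus>1\<close>. Injectivity is then
  read off the normal form: \<open>tr B\<close> gives \<open>\<nu>\<close>, the direction of \<open>a\<close> gives \<open>\<phi> + \<nu>\<close> together with
  the half of the sphere, and \<open>A\<close> gives \<open>\<theta>\<close>. Finally \<open>A = h P\<close> where
  \<open>P = cos \<phi> + i sin \<phi> (n\<cdot>\<sigma>)\<close> commutes with \<open>B\<close>, so \<open>[A,B] = h B h\<^sup>-\<^sup>1 B\<^sup>-\<^sup>1\<close>, whence
  \<open>\<mu> = 1 - 2 sin\<^sup>2\<nu> sin\<^sup>2\<theta> / D \<in> [-1,1)\<close>.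
\<close>

lemma matrix_inv_eqI:
  fixes A B :: "'a::semiring_1^'n^'n"
  assumes "A ** B = mat 1" "B ** A = mat 1"
  shows "matrix_inv A = B"
proof -
  have "\<exists>A'. A ** A' = mat 1 \<and> A' ** A = mat 1" using assms by blast
  then have inv: "A ** matrix_inv A = mat 1" "matrix_inv A ** A = mat 1"
    unfolding matrix_inv_def by (metis (mono_tags, lifting) someI_ex)+
  have "matrix_inv A = matrix_inv A ** (A ** B)" using assms by simp
  also have "\<dots> = B" using inv by (simp add: matrix_mul_assoc)
  finally show ?thesis .
qed

subsection \<open>Quaternion coordinates on SU(2)\<close>

lemma mat2_eq_iff: "mat2 p q r s = mat2 p1 q1 r1 s1 \<longleftrightarrow> p = p1 \<and> q = q1 \<and> r = r1 \<and> s = s1"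
  by (auto simp: mat2_def vec_eq_iff forall_2)

lemma mat2_mult:
  "mat2 p q r s ** mat2 p1 q1 r1 s1 =
     mat2 (p * p1 + q * r1) (p * q1 + q * s1) (r * p1 + s * r1) (r * q1 + s * s1)"
  by (simp add: mat2_def matrix_matrix_mult_def vec_eq_iff forall_2 sum_2)

lemma su2_of_eq_mat2:
  "su2_of w x y z = mat2 (of_real w + \<i> * of_real z) (\<i> * of_real x + of_real y)
                         (\<i> * of_real x - of_real y) (of_real w - \<i> * of_real z)"
  by (simp add: su2_of_def mat2_def csc_def sx_def sy_def sz_def vec_eq_iff forall_2 mat_def
      algebra_simps)

lemma su2_of_eq_iff: "su2_of w x y z = su2_of w1 x1 y1 z1 \<longleftrightarrow> w = w1 \<and> x = x1 \<and> y = y1 \<and> z = z1"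
  unfolding su2_of_eq_mat2 mat2_eq_iff by (auto simp: complex_eq_iff)

lemma su2_of_mult:
  "su2_of w x y z ** su2_of w' x' y' z' =
     su2_of (w*w' - x*x' - y*y' - z*z') (w*x' + w'*x - (y*z' - z*y'))
            (w*y' + w'*y - (z*x' - x*z')) (w*z' + w'*z - (x*y' - y*x'))"
  unfolding su2_of_eq_mat2 mat2_mult mat2_eq_iff by (simp add: complex_eq_iff algebra_simps)

lemma su2_of_one: "su2_of 1 0 0 0 = mat 1"
  by (simp add: su2_of_eq_mat2 mat2_def mat_def vec_eq_iff forall_2)

lemma uminus_su2_of: "- su2_of w x y z = su2_of (-w) (-x) (-y) (-z)"
  by (simp add: su2_of_eq_mat2 mat2_def vec_eq_iff forall_2 algebra_simps)

lemma trace_su2_of: "trace (su2_of w x y z) = 2 * of_real w"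
  by (simp add: su2_of_eq_mat2 mat2_def trace_def sum_2)

lemma det_su2_of: "det (su2_of w x y z) = of_real (w\<^sup>2 + x\<^sup>2 + y\<^sup>2 + z\<^sup>2)"
  by (simp add: su2_of_eq_mat2 mat2_def det_2 complex_eq_iff power2_eq_square algebra_simps)

lemma ctrans_su2_of: "ctrans (su2_of w x y z) = su2_of w (-x) (-y) (-z)"
  by (simp add: su2_of_eq_mat2 mat2_def ctrans_def vec_eq_iff forall_2 complex_eq_iff)

definition unit_quat :: "real \<Rightarrow> real \<Rightarrow> real \<Rightarrow> real \<Rightarrow> bool" where
  "unit_quat w x y z \<longleftrightarrow> w\<^sup>2 + x\<^sup>2 + y\<^sup>2 + z\<^sup>2 = 1"

lemma unit_quat_mult:
  assumes "unit_quat w x y z" "unit_quat w' x' y' z'"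
  shows "unit_quat (w*w' - x*x' - y*y' - z*z') (w*x' + w'*x - (y*z' - z*y'))
                   (w*y' + w'*y - (z*x' - x*z')) (w*z' + w'*z - (x*y' - y*x'))"
proof -
  have "(w*w' - x*x' - y*y' - z*z')\<^sup>2 + (w*x' + w'*x - (y*z' - z*y'))\<^sup>2
      + (w*y' + w'*y - (z*x' - x*z'))\<^sup>2 + (w*z' + w'*z - (x*y' - y*x'))\<^sup>2
      = (w\<^sup>2 + x\<^sup>2 + y\<^sup>2 + z\<^sup>2) * (w'\<^sup>2 + x'\<^sup>2 + y'\<^sup>2 + z'\<^sup>2)"
    by algebra
  then show ?thesis using assms by (simp add: unit_quat_def)
qed

lemma matrix_inv_su2_of:
  "unit_quat w x y z \<Longrightarrow> matrix_inv (su2_of w x y z) = su2_of w (-x) (-y) (-z)"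
  by (rule matrix_inv_eqI)
    (simp_all add: su2_of_mult su2_of_one[symmetric] su2_of_eq_iff unit_quat_def power2_eq_square
      algebra_simps)

lemma su2_of_in_SU2: "unit_quat w x y z \<Longrightarrow> su2_of w x y z \<in> SU2"
  by (simp add: SU2_def ctrans_su2_of su2_of_mult det_su2_of su2_of_one[symmetric] su2_of_eq_iff
      unit_quat_def power2_eq_square algebra_simps)

lemma SU2_cases:
  assumes "U \<in> SU2"
  obtains w x y z where "unit_quat w x y z" "U = su2_of w x y z"
proof -
  define a b c d where "a = U$1$1" "b = U$1$2" "c = U$2$1" "d = U$2$2"
  have U: "U = mat2 a b c d" by (simp add: a_b_c_d_def mat2_def vec_eq_iff forall_2)
  have unitary: "U ** ctrans U = mat 1" and det: "det U = 1" using assms by (auto simp: SU2_def)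
  have row1: "a * cnj a + b * cnj b = 1" and rows: "a * cnj c + b * cnj d = 0"
    using unitary unfolding U
    by (simp_all add: mat2_def ctrans_def matrix_matrix_mult_def vec_eq_iff forall_2 sum_2 mat_def)
  have det2: "a*d - b*c = 1" using det unfolding U by (simp add: det_2 mat2_def)
  have rows': "cnj a * c + cnj b * d = 0" using arg_cong[OF rows, of cnj] by (simp add: mult.commute)
  have "cnj a = cnj a * (a*d - b*c)" using det2 by simp
  also have "\<dots> = (a * cnj a + b * cnj b) * d - b * (cnj a * c + cnj b * d)" by (simp add: algebra_simps)
  finally have d: "d = cnj a" using row1 rows' by simp
  have "- cnj b = - cnj b * (a*d - b*c)" using det2 by simp
  also have "\<dots> = (a * cnj a + b * cnj b) * c - a * (cnj a * c + cnj b * d)" by (simp add: algebra_simps)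
  finally have c: "c = - cnj b" using row1 rows' by simp
  show ?thesis
  proof
    show "U = su2_of (Re a) (Im b) (Re b) (Im a)"
      unfolding U su2_of_eq_mat2 mat2_eq_iff c d by (simp add: complex_eq_iff)
    show "unit_quat (Re a) (Im b) (Re b) (Im a)"
      using arg_cong[OF row1, of Re] by (simp add: unit_quat_def power2_eq_square algebra_simps)
  qed
qed

lemma SU2_mult_closed:
  assumes "U \<in> SU2" "V \<in> SU2"
  shows "U ** V \<in> SU2"
proof -
  obtain w x y z where u: "unit_quat w x y z" "U = su2_of w x y z" using SU2_cases[OF assms(1)] .
  obtain w' x' y' z' where v: "unit_quat w' x' y' z'" "V = su2_of w' x' y' z'"
    using SU2_cases[OF assms(2)] .
  show ?thesis unfolding u(2) v(2) su2_of_mult by (rule su2_of_in_SU2[OF unit_quat_mult[OF u(1) v(1)]])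
qed

lemma SU2_matrix_inv:
  assumes "U \<in> SU2"
  shows SU2_mult_matrix_inv: "U ** matrix_inv U = mat 1"
    and SU2_matrix_inv_mult: "matrix_inv U ** U = mat 1"
    and SU2_matrix_inv_closed: "matrix_inv U \<in> SU2"
proof -
  obtain w x y z where u: "unit_quat w x y z" "U = su2_of w x y z" using SU2_cases[OF assms] .
  have u': "unit_quat w (-x) (-y) (-z)" using u(1) by (simp add: unit_quat_def)
  show "U ** matrix_inv U = mat 1" "matrix_inv U ** U = mat 1"
    unfolding u(2) matrix_inv_su2_of[OF u(1)] su2_of_mult su2_of_one[symmetric] su2_of_eq_iff
    using u(1) by (auto simp: unit_quat_def power2_eq_square algebra_simps)
  show "matrix_inv U \<in> SU2" unfolding u(2) matrix_inv_su2_of[OF u(1)] by (rule su2_of_in_SU2[OF u'])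
qed

lemma matrix_inv_mult_SU2:
  assumes "U \<in> SU2" "V \<in> SU2"
  shows "matrix_inv (U ** V) = matrix_inv V ** matrix_inv U"
proof (rule matrix_inv_eqI)
  have "U ** V ** (matrix_inv V ** matrix_inv U) = U ** (V ** matrix_inv V) ** matrix_inv U"
    by (simp add: matrix_mul_assoc)
  then show "U ** V ** (matrix_inv V ** matrix_inv U) = mat 1"
    using assms by (simp add: SU2_mult_matrix_inv)
  have "matrix_inv V ** matrix_inv U ** (U ** V) = matrix_inv V ** (matrix_inv U ** U) ** V"
    by (simp add: matrix_mul_assoc)
  then show "matrix_inv V ** matrix_inv U ** (U ** V) = mat 1"
    using assms by (simp add: SU2_matrix_inv_mult)
qed

lemma trace_matrix_inv_SU2:
  assumes "U \<in> SU2"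
  shows "trace (matrix_inv U) = trace U"
proof -
  obtain w x y z where "unit_quat w x y z" "U = su2_of w x y z" using SU2_cases[OF assms] .
  then show ?thesis by (simp add: matrix_inv_su2_of trace_su2_of)
qed

lemma comm_mult_commuting:
  assumes "h \<in> SU2" "P \<in> SU2" "P ** B = B ** P"
  shows "comm (h ** P) B = comm h B"
proof -
  have "P ** B ** matrix_inv P = B ** (P ** matrix_inv P)"
    using assms(3) by (simp add: matrix_mul_assoc)
  then have "P ** B ** matrix_inv P = B" by (simp add: SU2_mult_matrix_inv[OF assms(2)])
  moreover have "comm (h ** P) B = h ** (P ** B ** matrix_inv P) ** matrix_inv h ** matrix_inv B"
    unfolding comm_def matrix_inv_mult_SU2[OF assms(1,2)] by (simp add: matrix_mul_assoc)
  ultimately show ?thesis by (simp add: comm_def)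
qed

subsection \<open>Conjugacy classes and normalized representatives\<close>

lemma conj_SU2_commute:
  assumes "g \<in> SU2"
  shows "(g ** X ** matrix_inv g) ** g = g ** X"
  by (metis SU2_matrix_inv_mult[OF assms] matrix_mul_assoc matrix_mul_rid)

lemma conj_SU2_compose:
  assumes "g \<in> SU2" "h \<in> SU2"
  shows "h ** (g ** X ** matrix_inv g) ** matrix_inv h = (h ** g) ** X ** matrix_inv (h ** g)"
  unfolding matrix_inv_mult_SU2[OF assms(2,1)] by (simp add: matrix_mul_assoc)

lemma conj_SU2_cancel:
  assumes "g \<in> SU2"
  shows "matrix_inv g ** (g ** X ** matrix_inv g) ** matrix_inv (matrix_inv g) = X"
proof -
  have "matrix_inv (matrix_inv g) = g"
    by (rule matrix_inv_eqI) (simp_all add: SU2_mult_matrix_inv SU2_matrix_inv_mult assms)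
  moreover have "matrix_inv g ** (g ** X ** matrix_inv g) ** g
      = (matrix_inv g ** g) ** X ** (matrix_inv g ** g)"
    by (simp add: matrix_mul_assoc)
  ultimately show ?thesis by (simp add: SU2_matrix_inv_mult[OF assms])
qed

lemma trace_conj_SU2:
  assumes "g \<in> SU2"
  shows "trace (g ** X ** matrix_inv g) = trace X"
proof -
  have "trace (g ** X ** matrix_inv g) = trace (matrix_inv g ** (g ** X))" by (rule trace_mul_sym)
  also have "\<dots> = trace X" using SU2_matrix_inv_mult[OF assms] by (simp add: matrix_mul_assoc)
  finally show ?thesis .
qed

lemma conj_equiv_sym: "conj_equiv t t' \<Longrightarrow> conj_equiv t' t"
  unfolding conj_equiv_def
  by (cases t rule: prod_cases4, cases t' rule: prod_cases4)
    (auto simp: conj_SU2_cancel intro!: bexI[of _ "matrix_inv _"] SU2_matrix_inv_closed)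

lemma conj_equiv_trans: "conj_equiv t t' \<Longrightarrow> conj_equiv t' t'' \<Longrightarrow> conj_equiv t t''"
  unfolding conj_equiv_def
  by (cases t rule: prod_cases4, cases t' rule: prod_cases4, cases t'' rule: prod_cases4)
    (auto simp: conj_SU2_compose intro!: SU2_mult_closed)

lemma su2_of_commute_z_axis:
  assumes "sin \<beta> \<noteq> 0"
    and "su2_of (cos \<beta>) 0 0 (sin \<beta>) ** su2_of w x y z = su2_of w x y z ** su2_of (cos \<beta>) 0 0 (sin \<beta>)"
  shows "x = 0" "y = 0"
  using assms unfolding su2_of_mult su2_of_eq_iff by (auto simp: algebra_simps)

lemma normalized_unique:
  assumes "normalized t" "normalized t'" "conj_equiv t t'"
  shows "t' = t"
proof -
  obtain A B a b A' B' a' b' where t: "t = (A, B, a, b)" "t' = (A', B', a', b')"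
    by (metis prod_cases4)
  obtain \<alpha> \<beta> r where bounds: "0 < \<beta>" "\<beta> < pi" "0 \<le> r" "r < 1"
    and A: "A = su2_of (r * cos \<alpha>) (sqrt (1 - r\<^sup>2)) 0 (r * sin \<alpha>)"
    and B: "B = su2_of (cos \<beta>) 0 0 (sin \<beta>)"
    using assms(1) unfolding t normalized_def by auto
  obtain \<alpha>' \<beta>' r' where bounds': "0 < \<beta>'" "\<beta>' < pi" "0 \<le> r'" "r' < 1"
    and A': "A' = su2_of (r' * cos \<alpha>') (sqrt (1 - r'\<^sup>2)) 0 (r' * sin \<alpha>')"
    and B': "B' = su2_of (cos \<beta>') 0 0 (sin \<beta>')"
    using assms(2) unfolding t normalized_def by auto
  obtain g where g: "g \<in> SU2" and conj: "A' = g ** A ** matrix_inv g" "B' = g ** B ** matrix_inv g"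
    "a' = g ** a ** matrix_inv g" "b' = g ** b ** matrix_inv g"
    using assms(3) unfolding t conj_equiv_def by auto
  obtain w x y z where u: "unit_quat w x y z" and g_eq: "g = su2_of w x y z"
    using SU2_cases[OF g] .
  have "trace B' = trace B" using trace_conj_SU2[OF g, of B] conj(2) by simp
  then have "cos \<beta>' = cos \<beta>" unfolding B B' trace_su2_of by simp
  then have "\<beta>' = \<beta>" using cos_inj_pi bounds bounds' by auto
  moreover have "sin \<beta> \<noteq> 0" using sin_gt_zero bounds by fastforce
  moreover have "B' ** g = g ** B" using conj_SU2_commute[OF g, of B] conj(2) by simp
  ultimately have xy: "x = 0" "y = 0"
    using su2_of_commute_z_axis unfolding B B' g_eq by blast+
  have "A' ** g = g ** A" using conj_SU2_commute[OF g, of A] conj(1) by simp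
  then have "z * (sqrt (1 - r\<^sup>2) + sqrt (1 - r'\<^sup>2)) = 0"
    unfolding A A' g_eq xy su2_of_mult su2_of_eq_iff by (auto simp: algebra_simps)
  moreover have "r\<^sup>2 < 1" "r'\<^sup>2 < 1"
    using bounds bounds' by (simp_all add: power_less_one_iff abs_square_less_1)
  ultimately have "z = 0"
    by (metis add_pos_pos diff_gt_0_iff_gt mult_eq_0_iff less_irrefl real_sqrt_gt_zero)
  then have "w\<^sup>2 = 1" "matrix_inv g = su2_of w 0 0 0"
    using u matrix_inv_su2_of[OF u] unfolding g_eq xy by (simp_all add: unit_quat_def)
  then have "g ** X ** matrix_inv g = X" for X
    unfolding g_eq xy \<open>z = 0\<close> su2_of_eq_mat2
    by (simp add: mat2_def matrix_matrix_mult_def vec_eq_iff forall_2 sum_2 complex_eq_iff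
        power2_eq_square algebra_simps)
  then show ?thesis unfolding t conj by simp
qed

subsection \<open>Rotations\<close>

definition rot_z :: "real \<Rightarrow> cmat" where
  "rot_z t = su2_of (cos (t/2)) 0 0 (- sin (t/2))"

definition rot_y :: "real \<Rightarrow> cmat" where
  "rot_y t = su2_of (cos (t/2)) 0 (sin (t/2)) 0"

lemma rot_z_in_SU2: "rot_z t \<in> SU2"
  unfolding rot_z_def by (rule su2_of_in_SU2) (simp add: unit_quat_def)

lemma rot_y_in_SU2: "rot_y t \<in> SU2"
  unfolding rot_y_def by (rule su2_of_in_SU2) (simp add: unit_quat_def)

lemma rot_z_conj:
  "rot_z t ** su2_of w x y z ** matrix_inv (rot_z t) =
     su2_of w (x * cos t - y * sin t) (x * sin t + y * cos t) z"
proof -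
  define c s where "c = cos (t/2)" "s = sin (t/2)"
  have cs: "c\<^sup>2 + s\<^sup>2 = 1" "cos t = c\<^sup>2 - s\<^sup>2" "sin t = 2 * s * c"
    unfolding c_s_def using cos_double[of "t/2"] sin_double[of "t/2"] by (auto simp: power2_eq_square)
  have inv: "matrix_inv (rot_z t) = su2_of c 0 0 s"
    unfolding rot_z_def c_s_def[symmetric] using matrix_inv_su2_of[of c 0 0 "-s"] cs(1)
    by (simp add: unit_quat_def)
  show ?thesis unfolding inv
    unfolding rot_z_def c_s_def[symmetric] su2_of_mult su2_of_eq_iff cs(2,3) using cs(1) by algebra
qed

lemma rot_y_conj:
  "rot_y t ** su2_of w x y z ** matrix_inv (rot_y t) =
     su2_of w (x * cos t - z * sin t) y (x * sin t + z * cos t)"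
proof -
  define c s where "c = cos (t/2)" "s = sin (t/2)"
  have cs: "c\<^sup>2 + s\<^sup>2 = 1" "cos t = c\<^sup>2 - s\<^sup>2" "sin t = 2 * s * c"
    unfolding c_s_def using cos_double[of "t/2"] sin_double[of "t/2"] by (auto simp: power2_eq_square)
  have inv: "matrix_inv (rot_y t) = su2_of c 0 (-s) 0"
    unfolding rot_y_def c_s_def[symmetric] using matrix_inv_su2_of[of c 0 s 0] cs(1)
    by (simp add: unit_quat_def)
  show ?thesis unfolding inv
    unfolding rot_y_def c_s_def[symmetric] su2_of_mult su2_of_eq_iff cs(2,3) using cs(1) by algebra
qed

lemma rot_zyz_conj:
  "(rot_z t3 ** rot_y t2 ** rot_z t1) ** su2_of w x y z ** matrix_inv (rot_z t3 ** rot_y t2 ** rot_z t1) =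
     su2_of w (((x * cos t1 - y * sin t1) * cos t2 - z * sin t2) * cos t3 - (x * sin t1 + y * cos t1) * sin t3)
       (((x * cos t1 - y * sin t1) * cos t2 - z * sin t2) * sin t3 + (x * sin t1 + y * cos t1) * cos t3)
       ((x * cos t1 - y * sin t1) * sin t2 + z * cos t2)"
proof -
  have "(rot_z t3 ** rot_y t2 ** rot_z t1) ** X ** matrix_inv (rot_z t3 ** rot_y t2 ** rot_z t1) =
      rot_z t3 ** (rot_y t2 ** (rot_z t1 ** X ** matrix_inv (rot_z t1)) ** matrix_inv (rot_y t2))
        ** matrix_inv (rot_z t3)" for X
    using conj_SU2_compose[OF rot_z_in_SU2 SU2_mult_closed[OF rot_z_in_SU2 rot_y_in_SU2]]
      conj_SU2_compose[OF rot_y_in_SU2 rot_z_in_SU2] by metis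
  then show ?thesis by (simp only: rot_z_conj rot_y_conj)
qed

lemma frame_rotation_conj:
  assumes "cos \<tau> = s * sin \<psi>" "sin \<tau> = s * cos \<psi>"
  shows "(rot_z \<tau> ** rot_y (pi/2) ** rot_z (-\<theta>)) ** su2_of w x y z
           ** matrix_inv (rot_z \<tau> ** rot_y (pi/2) ** rot_z (-\<theta>)) =
         su2_of w (- s * (z * sin \<psi> + (y * cos \<theta> - x * sin \<theta>) * cos \<psi>))
           (s * ((y * cos \<theta> - x * sin \<theta>) * sin \<psi> - z * cos \<psi>)) (x * cos \<theta> + y * sin \<theta>)"
  unfolding rot_zyz_conj assms cos_minus sin_minus cos_pi_half sin_pi_half su2_of_eq_iff
  by (simp add: algebra_simps)

subsection \<open>Angles in the plane\<close>

lemma polar_coordinates: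
  fixes x y :: real
  obtains \<alpha> where "0 \<le> \<alpha>" "\<alpha> \<le> 2*pi"
    "x = sqrt (x\<^sup>2 + y\<^sup>2) * cos \<alpha>" "y = sqrt (x\<^sup>2 + y\<^sup>2) * sin \<alpha>"
proof (cases "x\<^sup>2 + y\<^sup>2 = 0")
  case True
  then show ?thesis using that[of 0] by (simp add: sum_power2_eq_zero_iff)
next
  case False
  define r where "r = sqrt (x\<^sup>2 + y\<^sup>2)"
  have "x\<^sup>2 + y\<^sup>2 > 0" using False by (metis add_nonneg_nonneg zero_le_power2 less_eq_real_def)
  then have "r > 0" unfolding r_def by (rule real_sqrt_gt_zero)
  have "(x/r)\<^sup>2 + (y/r)\<^sup>2 = (x\<^sup>2 + y\<^sup>2) / r\<^sup>2" by (simp add: power_divide add_divide_distrib)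
  also have "\<dots> = 1" using False unfolding r_def by (simp add: sum_power2_eq_zero_iff)
  finally obtain \<alpha> where \<alpha>: "0 \<le> \<alpha>" "\<alpha> < 2*pi" "x/r = cos \<alpha>" "y/r = sin \<alpha>"
    by (rule sincos_total_2pi)
  then have "x = r * cos \<alpha>" "y = r * sin \<alpha>" using \<open>r > 0\<close> by (auto simp: field_simps)
  with \<alpha> show ?thesis using that[of \<alpha>] unfolding r_def by simp
qed

lemma signed_angle_eq:
  assumes "s\<^sup>2 = 1" "s'\<^sup>2 = 1" "s' * cos b = s * cos a" "s' * sin b = s * sin a" "\<bar>a - b\<bar> < pi"
  shows "a = b" "s' = s"
proof -
  have "s * s' * cos (a - b) = (s * cos a) * (s' * cos b) + (s * sin a) * (s' * sin b)"
    by (simp add: cos_diff algebra_simps)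
  also have "\<dots> = s'\<^sup>2 * ((cos b)\<^sup>2 + (sin b)\<^sup>2)"
    unfolding assms(3,4)[symmetric] by algebra
  finally have c: "s * s' * cos (a - b) = 1" using assms(2) by simp
  have "cos (a - b) \<noteq> -1" using cos_inj_pi[of "\<bar>a - b\<bar>" pi] assms(5) by (auto simp: cos_abs_real)
  moreover have "(s * s')\<^sup>2 = 1" using assms(1,2) by (simp add: power_mult_distrib)
  then have "s * s' = 1 \<or> s * s' = -1" by (simp add: power2_eq_1_iff)
  ultimately have ss': "s * s' = 1" and "cos (a - b) = 1" using c by auto
  then show "a = b" using cos_inj_pi[of "\<bar>a - b\<bar>" 0] assms(5) by (auto simp: cos_abs_real)
  have "s' = s\<^sup>2 * s'" using assms(1) by simp
  also have "\<dots> = s" using ss' by (simp add: power2_eq_square)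
  finally show "s' = s" .
qed

lemma polar_angle_eq:
  assumes "0 < k" "0 < k'" "k' * cos b = k * cos a" "k' * sin b = k * sin a" "\<bar>a - b\<bar> < pi"
  shows "a = b"
proof -
  have "k * k' * sin (a - b) = (k * sin a) * (k' * cos b) - (k * cos a) * (k' * sin b)"
    by (simp add: sin_diff algebra_simps)
  also have "\<dots> = 0" unfolding assms(3,4) by simp
  finally have "sin (a - b) = 0" using assms(1,2) by simp
  then show ?thesis using sin_eq_0_pi[of "a - b"] assms(5) by auto
qed

subsection \<open>The sphere Lagrangian in quaternion coordinates\<close>

lemma csc_xy_eq_su2_of:
  "csc (of_real c) (mat 1) + csc (\<i> * of_real s) (csc (of_real x) sx + csc (of_real y) sy) =
     su2_of c (s * x) (s * y) 0"
  by (simp add: su2_of_eq_mat2 mat2_def csc_def sx_def sy_def mat_def vec_eq_iff forall_2 complex_eq_iff)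

lemma csc_xz_eq_su2_of:
  "csc (of_real c) (csc \<i> (csc (of_real x) sx - csc (of_real z) sz)) = su2_of 0 (c * x) 0 (- (c * z))"
  by (simp add: su2_of_eq_mat2 mat2_def csc_def sx_def sz_def mat_def vec_eq_iff forall_2 complex_eq_iff)

lemma csc_i_sz: "csc \<i> sz = su2_of 0 0 0 1"
  by (simp add: su2_of_eq_mat2 mat2_def csc_def sz_def mat_def vec_eq_iff forall_2 complex_eq_iff)

lemma comm_relation_identity:
  assumes "u\<^sup>2 + v\<^sup>2 = 1" "c\<^sup>2 + s\<^sup>2 = 1" "c'\<^sup>2 + s'\<^sup>2 = 1" "v * c = u * s * s'"
  shows "su2_of 0 u 0 (-v) ** su2_of c (s * c') (s * s') 0 ** su2_of 0 (-u) 0 v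
      ** su2_of c (-(s * c')) (-(s * s')) 0 ** su2_of 0 0 0 1
      ** (- (su2_of 0 u 0 (-v) ** su2_of 0 0 0 (-1) ** su2_of 0 (-u) 0 v)) = mat 1"
  unfolding su2_of_mult uminus_su2_of su2_of_one[symmetric] su2_of_eq_iff
  using assms
  by (simp only: mult_zero_left mult_zero_right add_0_left add_0_right diff_zero minus_zero) algebra

lemma perturbation_bounds:
  assumes "0 < \<epsilon>" "\<epsilon> < 1" "\<phi> \<in> {0<..<pi}"
  shows "0 < \<epsilon> * sin \<phi>" "\<epsilon> * sin \<phi> < pi"
    "0 < sin (\<epsilon> * sin \<phi>)" "0 < cos (\<epsilon> * sin \<phi>)"
proof -
  have "0 < sin \<phi>" using assms(3) by (intro sin_gt_zero) auto
  then have pos: "0 < \<epsilon> * sin \<phi>" using assms(1) by simp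
  have "\<epsilon> * sin \<phi> \<le> \<epsilon>" using assms(1) sin_le_one[of \<phi>] by (simp add: mult_left_le)
  then have small: "\<epsilon> * sin \<phi> < pi / 2" using assms(2) pi_gt3 by linarith
  show "0 < \<epsilon> * sin \<phi>" "\<epsilon> * sin \<phi> < pi" using pos small by simp_all
  show "0 < sin (\<epsilon> * sin \<phi>)" using pos small by (intro sin_gt_zero) simp_all
  show "0 < cos (\<epsilon> * sin \<phi>)" using pos small by (intro cos_gt_zero) simp_all
qed

lemma sign_mult_sin_pos:
  assumes "\<theta> \<in> {0<..<pi} \<union> {pi<..<2*pi}"
  shows "0 < (if \<theta> < pi then 1 else -1) * sin \<theta>"
proof (cases "\<theta> < pi")
  case True
  then have "0 < sin \<theta>" using assms by (intro sin_gt_zero) auto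
  with True show ?thesis by simp
next
  case False
  then have "0 < sin (\<theta> - pi)" using assms by (intro sin_gt_zero) auto
  with False show ?thesis by (simp add: sin_diff)
qed

definition Ls_normal :: "real \<Rightarrow> real \<Rightarrow> real \<Rightarrow> tuple4" where
  "Ls_normal \<epsilon> \<phi> \<theta> = (let \<nu> = \<epsilon> * sin \<phi>; D = (cos \<nu>)\<^sup>2 + (sin \<nu>)\<^sup>2 * (sin \<theta>)\<^sup>2; k = 1 / sqrt D;
      s = (if \<theta> < pi then 1 else -1 :: real) in
    (su2_of (- (k * cos \<nu> * sin \<phi> * cos \<theta>)) (k * s * sin \<theta>) 0 (k * cos \<phi> * cos \<nu> * cos \<theta>),
     su2_of (cos \<nu>) 0 0 (sin \<nu>),
     su2_of 0 (- s * sin (\<phi> + \<nu>)) (- s * cos (\<phi> + \<nu>)) 0,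
     su2_of 0 (s * ((cos \<nu>)\<^sup>2 * (cos \<theta>)\<^sup>2 * sin (\<phi> + \<nu>) + (sin \<theta>)\<^sup>2 * sin (\<phi> - \<nu>)) / D)
              (s * ((cos \<nu>)\<^sup>2 * (cos \<theta>)\<^sup>2 * cos (\<phi> + \<nu>) + (sin \<theta>)\<^sup>2 * cos (\<phi> - \<nu>)) / D)
              (- (1/2) * sin (2 * \<nu>) * sin (2 * \<theta>) / D)))"

context
  fixes \<epsilon> \<phi> \<theta> \<nu> D k s :: real
  assumes nu_def: "\<nu> = \<epsilon> * sin \<phi>"
    and D_def: "D = (cos \<nu>)\<^sup>2 + (sin \<nu>)\<^sup>2 * (sin \<theta>)\<^sup>2"
    and D_pos: "0 < D"
    and k_def: "k = 1 / sqrt D"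
    and s_def: "s = (if \<theta> < pi then 1 else -1)"
begin

lemma k_sq_mult_D: "k\<^sup>2 * ((cos \<nu>)\<^sup>2 + (sin \<nu>)\<^sup>2 * (sin \<theta>)\<^sup>2) = 1"
  using D_pos unfolding k_def D_def[symmetric] by (simp add: power_divide)

lemma unit_quat_h: "unit_quat 0 (k * cos \<nu>) 0 (- (k * (sin \<nu> * sin \<theta>)))"
  using k_sq_mult_D unfolding unit_quat_def by (simp add: power_mult_distrib algebra_simps)

lemma Ls_eq_su2_of_mult:
  "Ls \<epsilon> \<phi> \<theta> =
    (su2_of 0 (k * cos \<nu>) 0 (- (k * (sin \<nu> * sin \<theta>))) ** su2_of (cos \<phi>) (sin \<phi> * cos \<theta>) (sin \<phi> * sin \<theta>) 0,
     su2_of (cos \<nu>) (sin \<nu> * cos \<theta>) (sin \<nu> * sin \<theta>) 0,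
     su2_of 0 0 0 1,
     - (su2_of 0 (k * cos \<nu>) 0 (- (k * (sin \<nu> * sin \<theta>))) ** su2_of 0 0 0 (-1)
         ** su2_of 0 (-(k * cos \<nu>)) 0 (k * (sin \<nu> * sin \<theta>))))"
proof -
  have h: "csc (of_real (1 / sqrt D)) (csc \<i> (csc (of_real (cos \<nu>)) sx - csc (of_real (sin \<nu> * sin \<theta>)) sz))
      = su2_of 0 (k * cos \<nu>) 0 (- (k * (sin \<nu> * sin \<theta>)))"
    unfolding csc_xz_eq_su2_of k_def ..
  show ?thesis
    unfolding Ls_def Let_def nu_def[symmetric] D_def[symmetric] h csc_xy_eq_su2_of csc_i_sz
    using matrix_inv_su2_of[OF unit_quat_h] matrix_inv_su2_of[of 0 0 0 1] by (simp add: unit_quat_def)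
qed

lemma Ls_eq_su2_of:
  "Ls \<epsilon> \<phi> \<theta> =
    (su2_of (- (k * cos \<nu> * sin \<phi> * cos \<theta>))
       (k * cos \<nu> * cos \<phi> - k * sin \<nu> * sin \<theta> * sin \<phi> * sin \<theta>)
       (k * sin \<nu> * sin \<theta> * sin \<phi> * cos \<theta>)
       (- (k * sin \<nu> * sin \<theta> * cos \<phi>) - k * cos \<nu> * sin \<phi> * sin \<theta>),
     su2_of (cos \<nu>) (sin \<nu> * cos \<theta>) (sin \<nu> * sin \<theta>) 0,
     su2_of 0 0 0 1,
     su2_of 0 (- 2 * k\<^sup>2 * sin \<nu> * cos \<nu> * sin \<theta>) 0 (2 * k\<^sup>2 * (sin \<nu>)\<^sup>2 * (sin \<theta>)\<^sup>2 - 1))"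
  unfolding Ls_eq_su2_of_mult su2_of_mult uminus_su2_of prod.inject su2_of_eq_iff
  using k_sq_mult_D by (simp add: power2_eq_square algebra_simps)

lemma conj_equiv_Ls_Ls_normal: "conj_equiv (Ls \<epsilon> \<phi> \<theta>) (Ls_normal \<epsilon> \<phi> \<theta>)"
proof -
  define \<tau> where "\<tau> = (if \<theta> < pi then pi/2 - (\<phi> + \<nu>) else - (pi/2) - (\<phi> + \<nu>))"
  define g where "g = rot_z \<tau> ** rot_y (pi/2) ** rot_z (-\<theta>)"
  have "cos \<tau> = s * sin (\<phi> + \<nu>)" "sin \<tau> = s * cos (\<phi> + \<nu>)"
    unfolding \<tau>_def s_def by (auto simp: cos_diff sin_diff)
  note conj_g = frame_rotation_conj[OF this, of \<theta>, folded g_def]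
  have div_D: "x / D = x * k\<^sup>2" for x using D_pos k_def by (simp add: power_divide)
  have pyth: "(sin \<theta>)\<^sup>2 + (cos \<theta>)\<^sup>2 = 1" "(sin \<phi>)\<^sup>2 + (cos \<phi>)\<^sup>2 = 1" "(sin \<nu>)\<^sup>2 + (cos \<nu>)\<^sup>2 = 1"
    by simp_all
  have A: "g ** su2_of (- (k * cos \<nu> * sin \<phi> * cos \<theta>))
       (k * cos \<nu> * cos \<phi> - k * sin \<nu> * sin \<theta> * sin \<phi> * sin \<theta>)
       (k * sin \<nu> * sin \<theta> * sin \<phi> * cos \<theta>)
       (- (k * sin \<nu> * sin \<theta> * cos \<phi>) - k * cos \<nu> * sin \<phi> * sin \<theta>) ** matrix_inv g
    = su2_of (- (k * cos \<nu> * sin \<phi> * cos \<theta>)) (k * s * sin \<theta>) 0 (k * cos \<phi> * cos \<nu> * cos \<theta>)"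
    unfolding conj_g su2_of_eq_iff sin_add cos_add using pyth by algebra
  have B: "g ** su2_of (cos \<nu>) (sin \<nu> * cos \<theta>) (sin \<nu> * sin \<theta>) 0 ** matrix_inv g
    = su2_of (cos \<nu>) 0 0 (sin \<nu>)"
    unfolding conj_g su2_of_eq_iff using pyth by algebra
  have a: "g ** su2_of 0 0 0 1 ** matrix_inv g = su2_of 0 (- s * sin (\<phi> + \<nu>)) (- s * cos (\<phi> + \<nu>)) 0"
    unfolding conj_g su2_of_eq_iff by simp
  have b: "g ** su2_of 0 (- 2 * k\<^sup>2 * sin \<nu> * cos \<nu> * sin \<theta>) 0 (2 * k\<^sup>2 * (sin \<nu>)\<^sup>2 * (sin \<theta>)\<^sup>2 - 1)
      ** matrix_inv g
    = su2_of 0 (s * ((cos \<nu>)\<^sup>2 * (cos \<theta>)\<^sup>2 * sin (\<phi> + \<nu>) + (sin \<theta>)\<^sup>2 * sin (\<phi> - \<nu>)) / D)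
              (s * ((cos \<nu>)\<^sup>2 * (cos \<theta>)\<^sup>2 * cos (\<phi> + \<nu>) + (sin \<theta>)\<^sup>2 * cos (\<phi> - \<nu>)) / D)
              (- (1/2) * sin (2 * \<nu>) * sin (2 * \<theta>) / D)"
    unfolding conj_g su2_of_eq_iff div_D sin_add cos_add sin_diff cos_diff sin_double
    using pyth k_sq_mult_D by algebra
  have g_SU2: "g \<in> SU2" unfolding g_def by (intro SU2_mult_closed rot_z_in_SU2 rot_y_in_SU2)
  show ?thesis
    unfolding conj_equiv_def Ls_eq_su2_of Ls_normal_def Let_def nu_def[symmetric] D_def[symmetric]
      k_def[symmetric] s_def[symmetric] prod.case
    by (intro bexI[of _ g] conjI) (simp_all only: A B a b g_SU2)
qed

lemma in_R_Ls: "in_R (Ls \<epsilon> \<phi> \<theta>)"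
proof -
  define h where "h = su2_of 0 (k * cos \<nu>) 0 (- (k * (sin \<nu> * sin \<theta>)))"
  define P where "P = su2_of (cos \<phi>) (sin \<phi> * cos \<theta>) (sin \<phi> * sin \<theta>) 0"
  define B where "B = su2_of (cos \<nu>) (sin \<nu> * cos \<theta>) (sin \<nu> * sin \<theta>) 0"
  define b where "b = - (h ** su2_of 0 0 0 (-1) ** su2_of 0 (- (k * cos \<nu>)) 0 (k * (sin \<nu> * sin \<theta>)))"
  have pyth: "(sin \<theta>)\<^sup>2 + (cos \<theta>)\<^sup>2 = 1" "(sin \<phi>)\<^sup>2 + (cos \<phi>)\<^sup>2 = 1" "(sin \<nu>)\<^sup>2 + (cos \<nu>)\<^sup>2 = 1"
    by simp_all
  have unit_P: "unit_quat (cos \<phi>) (sin \<phi> * cos \<theta>) (sin \<phi> * sin \<theta>) 0"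
    and unit_B: "unit_quat (cos \<nu>) (sin \<nu> * cos \<theta>) (sin \<nu> * sin \<theta>) 0"
    unfolding unit_quat_def using pyth by (simp_all only: power_zero_numeral add_0_right) algebra+
  have "b = su2_of 0 (- 2 * k\<^sup>2 * sin \<nu> * cos \<nu> * sin \<theta>) 0 (2 * k\<^sup>2 * (sin \<nu>)\<^sup>2 * (sin \<theta>)\<^sup>2 - 1)"
    using Ls_eq_su2_of unfolding Ls_eq_su2_of_mult b_def h_def by simp
  moreover have "unit_quat 0 (- 2 * k\<^sup>2 * sin \<nu> * cos \<nu> * sin \<theta>) 0 (2 * k\<^sup>2 * (sin \<nu>)\<^sup>2 * (sin \<theta>)\<^sup>2 - 1)"
    unfolding unit_quat_def using k_sq_mult_D pyth
    by (simp only: power_zero_numeral add_0_right add_0_left) algebra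
  ultimately have SU2: "h \<in> SU2" "P \<in> SU2" "B \<in> SU2" "su2_of 0 0 0 1 \<in> SU2" "b \<in> SU2"
    unfolding h_def P_def B_def using unit_quat_h unit_P unit_B
    by (auto intro!: su2_of_in_SU2 simp: unit_quat_def)
  have "P ** B = B ** P" unfolding P_def B_def su2_of_mult su2_of_eq_iff by (simp add: algebra_simps)
  then have "comm (h ** P) B = h ** B ** matrix_inv h ** matrix_inv B"
    using comm_mult_commuting[OF SU2(1,2)] by (simp add: comm_def)
  moreover have "h ** B ** matrix_inv h ** matrix_inv B ** su2_of 0 0 0 1 ** b = mat 1"
    unfolding h_def B_def b_def matrix_inv_su2_of[OF unit_quat_h] matrix_inv_su2_of[OF unit_B]
      minus_zero minus_minus
    by (rule comm_relation_identity) (use k_sq_mult_D pyth in \<open>auto simp: power_mult_distrib algebra_simps\<close>)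
  ultimately show ?thesis
    unfolding in_R_def Ls_eq_su2_of_mult h_def[symmetric] P_def[symmetric] B_def[symmetric]
      b_def[symmetric] prod.case
    using SU2 SU2_mult_closed[OF SU2(1,2)]
    by (simp add: trace_su2_of b_def h_def su2_of_mult uminus_su2_of)
qed

lemma mu_Ls: "mu (Ls \<epsilon> \<phi> \<theta>) = 1 - 2 * k\<^sup>2 * (sin \<nu>)\<^sup>2 * (sin \<theta>)\<^sup>2"
proof -
  obtain A B a b where L: "Ls \<epsilon> \<phi> \<theta> = (A, B, a, b)" by (metis prod_cases4)
  have rel: "comm A B ** (a ** b) = mat 1" and ab: "a ** b \<in> SU2"
    using in_R_Ls SU2_mult_closed unfolding L in_R_def by (auto simp: matrix_mul_assoc)
  have "comm A B = comm A B ** ((a ** b) ** matrix_inv (a ** b))"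
    using SU2_mult_matrix_inv[OF ab] by simp
  also have "\<dots> = matrix_inv (a ** b)"
    by (metis matrix_mul_assoc matrix_mul_lid rel)
  finally have "trace (comm A B) = trace (a ** b)" using trace_matrix_inv_SU2[OF ab] by simp
  moreover have "a = su2_of 0 0 0 1"
    "b = su2_of 0 (- 2 * k\<^sup>2 * sin \<nu> * cos \<nu> * sin \<theta>) 0 (2 * k\<^sup>2 * (sin \<nu>)\<^sup>2 * (sin \<theta>)\<^sup>2 - 1)"
    using Ls_eq_su2_of unfolding L by auto
  ultimately show ?thesis unfolding L mu_def prod.case by (simp add: su2_of_mult trace_su2_of)
qed

lemma in_P4_Ls:
  assumes "sin \<nu> \<noteq> 0" "sin \<theta> \<noteq> 0"
  shows "in_P4 (Ls \<epsilon> \<phi> \<theta>)"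
proof -
  have "0 < k" using D_pos k_def by simp
  then have "0 < k\<^sup>2 * (sin \<nu>)\<^sup>2 * (sin \<theta>)\<^sup>2" using assms by simp
  moreover have "k\<^sup>2 * (sin \<nu>)\<^sup>2 * (sin \<theta>)\<^sup>2 \<le> k\<^sup>2 * ((cos \<nu>)\<^sup>2 + (sin \<nu>)\<^sup>2 * (sin \<theta>)\<^sup>2)"
    by (simp add: algebra_simps)
  ultimately show ?thesis unfolding in_P4_def mu_Ls using in_R_Ls k_sq_mult_D by simp
qed

lemma normalized_Ls_normal:
  assumes "0 < s * sin \<theta>" "0 < \<nu>" "\<nu> < pi"
  shows "normalized (Ls_normal \<epsilon> \<phi> \<theta>)"
proof -
  define x y where "x = - (k * cos \<nu> * sin \<phi> * cos \<theta>)" "y = k * cos \<phi> * cos \<nu> * cos \<theta>"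
  define r where "r = sqrt (x\<^sup>2 + y\<^sup>2)"
  obtain \<alpha> where \<alpha>: "0 \<le> \<alpha>" "\<alpha> \<le> 2*pi" "x = r * cos \<alpha>" "y = r * sin \<alpha>"
    using polar_coordinates[of x y] unfolding r_def by blast
  have "x\<^sup>2 + y\<^sup>2 = k\<^sup>2 * (cos \<nu>)\<^sup>2 * (cos \<theta>)\<^sup>2"
    unfolding x_y_def using sin_cos_squared_add[of \<phi>] by algebra
  moreover have "r\<^sup>2 = x\<^sup>2 + y\<^sup>2" "s\<^sup>2 = 1" unfolding r_def s_def by simp_all
  ultimately have "1 - r\<^sup>2 = (k * s * sin \<theta>)\<^sup>2"
    using k_sq_mult_D sin_cos_squared_add[of \<nu>] sin_cos_squared_add[of \<theta>] by algebra
  moreover have "0 < k * s * sin \<theta>" using assms(1) D_pos k_def by (simp add: mult.assoc)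
  ultimately have sqrt_eq: "sqrt (1 - r\<^sup>2) = k * s * sin \<theta>" and "r\<^sup>2 < 1"
    by (simp, metis diff_gt_0_iff_gt zero_less_power2 less_irrefl)
  then have "r < 1" by (simp add: power_less_one_iff abs_square_less_1 r_def)
  moreover have "0 \<le> r" unfolding r_def by simp
  ultimately have "normalized (su2_of x (k * s * sin \<theta>) 0 y, su2_of (cos \<nu>) 0 0 (sin \<nu>), a, b)" for a b
    unfolding normalized_def prod.case using \<alpha> assms(2,3) sqrt_eq
    by (rule_tac exI[of _ \<alpha>], rule_tac exI[of _ \<nu>], rule_tac exI[of _ r]) simp
  then show ?thesis
    unfolding Ls_normal_def Let_def nu_def[symmetric] D_def[symmetric] k_def[symmetric]
      s_def[symmetric] x_y_def[symmetric] .
qed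

end

lemma Ls_normal_form:
  assumes "0 < \<epsilon>" "\<epsilon> < 1" "\<phi> \<in> {0<..<pi}" "\<theta> \<in> {0<..<pi} \<union> {pi<..<2*pi}"
  shows "conj_equiv (Ls \<epsilon> \<phi> \<theta>) (Ls_normal \<epsilon> \<phi> \<theta>)"
    and "normalized (Ls_normal \<epsilon> \<phi> \<theta>)"
    and "in_P4 (Ls \<epsilon> \<phi> \<theta>)"
proof -
  define \<nu> where "\<nu> = \<epsilon> * sin \<phi>"
  define D where "D = (cos \<nu>)\<^sup>2 + (sin \<nu>)\<^sup>2 * (sin \<theta>)\<^sup>2"
  define k where "k = 1 / sqrt D"
  define s where "s = (if \<theta> < pi then 1 else -1 :: real)"
  note \<nu> = perturbation_bounds[OF assms(1-3), folded \<nu>_def]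
  have "0 < D" unfolding D_def using \<nu>(4) by (simp add: add_pos_nonneg)
  note setting = \<nu>_def D_def this k_def s_def
  show "conj_equiv (Ls \<epsilon> \<phi> \<theta>) (Ls_normal \<epsilon> \<phi> \<theta>)" by (rule conj_equiv_Ls_Ls_normal[OF setting])
  show "normalized (Ls_normal \<epsilon> \<phi> \<theta>)"
    using normalized_Ls_normal[OF setting] sign_mult_sin_pos[OF assms(4)] \<nu>(1,2) s_def by simp
  show "in_P4 (Ls \<epsilon> \<phi> \<theta>)"
    using in_P4_Ls[OF setting] sign_mult_sin_pos[OF assms(4)] \<nu>(3) by fastforce
qed

lemma normalized_conj_equiv_Ls:
  assumes "0 < \<epsilon>" "\<epsilon> < 1" "\<phi> \<in> {0<..<pi}" "\<theta> \<in> {0<..<pi} \<union> {pi<..<2*pi}"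
    and "normalized t" "conj_equiv (Ls \<epsilon> \<phi> \<theta>) t"
  shows "t = Ls_normal \<epsilon> \<phi> \<theta>"
  using normalized_unique[OF Ls_normal_form(2)[OF assms(1-4)] assms(5)]
    conj_equiv_trans[OF conj_equiv_sym[OF Ls_normal_form(1)[OF assms(1-4)]] assms(6)] by blast

lemma Ls_normal_inj:
  assumes "0 < \<epsilon>" "\<epsilon> < 1"
    and "\<phi> \<in> {0<..<pi}" "\<theta> \<in> {0<..<pi} \<union> {pi<..<2*pi}"
    and "\<phi>' \<in> {0<..<pi}" "\<theta>' \<in> {0<..<pi} \<union> {pi<..<2*pi}"
    and "Ls_normal \<epsilon> \<phi> \<theta> = Ls_normal \<epsilon> \<phi>' \<theta>'"
  shows "\<phi> = \<phi>' \<and> \<theta> = \<theta>'"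
proof -
  define \<nu> \<nu>' where "\<nu> = \<epsilon> * sin \<phi>" "\<nu>' = \<epsilon> * sin \<phi>'"
  define k k' where "k = 1 / sqrt ((cos \<nu>)\<^sup>2 + (sin \<nu>)\<^sup>2 * (sin \<theta>)\<^sup>2)"
    "k' = 1 / sqrt ((cos \<nu>')\<^sup>2 + (sin \<nu>')\<^sup>2 * (sin \<theta>')\<^sup>2)"
  define s s' where "s = (if \<theta> < pi then 1 else -1 :: real)" "s' = (if \<theta>' < pi then 1 else -1 :: real)"
  note \<nu> = perturbation_bounds[OF assms(1-3), folded \<nu>_\<nu>'_def(1)]
  note \<nu>' = perturbation_bounds[OF assms(1,2,5), folded \<nu>_\<nu>'_def(2)]
  have eq: "cos \<nu>' = cos \<nu>"
    "s' * cos (\<phi>' + \<nu>') = s * cos (\<phi> + \<nu>)" "s' * sin (\<phi>' + \<nu>') = s * sin (\<phi> + \<nu>)"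
    "k' * cos \<nu>' * sin \<phi>' * cos \<theta>' = k * cos \<nu> * sin \<phi> * cos \<theta>"
    "k' * s' * sin \<theta>' = k * s * sin \<theta>"
    using assms(7) unfolding Ls_normal_def Let_def \<nu>_\<nu>'_def[symmetric] k_k'_def[symmetric]
      s_s'_def[symmetric] prod.inject su2_of_eq_iff by auto
  have "\<nu>' = \<nu>" using cos_inj_pi[of \<nu>' \<nu>] eq(1) \<nu> \<nu>' by auto
  have "\<bar>(\<phi> + \<nu>) - (\<phi>' + \<nu>')\<bar> < pi" using assms(3,5) \<open>\<nu>' = \<nu>\<close> by auto
  moreover have "s\<^sup>2 = 1" "s'\<^sup>2 = 1" unfolding s_s'_def by simp_all
  ultimately have "\<phi> + \<nu> = \<phi>' + \<nu>'" "s' = s" using signed_angle_eq[OF _ _ eq(2,3)] by auto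
  then have "\<phi>' = \<phi>" using \<open>\<nu>' = \<nu>\<close> by simp
  have "cos \<nu> * sin \<phi> \<noteq> 0" using \<nu>(4) assms(3) sin_gt_zero[of \<phi>] by simp
  have "0 < k" "0 < k'" using \<nu>(4) \<nu>'(4) unfolding k_k'_def by (simp_all add: add_pos_nonneg)
  moreover have "k' * cos \<theta>' = k * cos \<theta>"
    using eq(4) \<open>cos \<nu> * sin \<phi> \<noteq> 0\<close> unfolding \<open>\<nu>' = \<nu>\<close> \<open>\<phi>' = \<phi>\<close> by (simp add: algebra_simps)
  moreover have "k' * sin \<theta>' = k * sin \<theta>" using eq(5) \<open>s' = s\<close> s_s'_def by (auto split: if_splits)
  moreover have "\<bar>\<theta> - \<theta>'\<bar> < pi"
    using assms(4,6) \<open>s' = s\<close> unfolding s_s'_def by (auto split: if_splits)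
  ultimately have "\<theta> = \<theta>'" by (rule polar_angle_eq)
  with \<open>\<phi>' = \<phi>\<close> show ?thesis by simp
qed

lemma Ls_conj_equiv_inj:
  assumes "0 < \<epsilon>" "\<epsilon> < 1"
    and "\<phi> \<in> {0<..<pi}" "\<theta> \<in> {0<..<pi} \<union> {pi<..<2*pi}"
    and "\<phi>' \<in> {0<..<pi}" "\<theta>' \<in> {0<..<pi} \<union> {pi<..<2*pi}"
    and "conj_equiv (Ls \<epsilon> \<phi> \<theta>) (Ls \<epsilon> \<phi>' \<theta>')"
  shows "\<phi> = \<phi>' \<and> \<theta> = \<theta>'"
proof (rule Ls_normal_inj[OF assms(1-6)])
  have "conj_equiv (Ls \<epsilon> \<phi> \<theta>) (Ls_normal \<epsilon> \<phi>' \<theta>')"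
    using conj_equiv_trans[OF assms(7) Ls_normal_form(1)[OF assms(1,2,5,6)]] .
  then show "Ls_normal \<epsilon> \<phi> \<theta> = Ls_normal \<epsilon> \<phi>' \<theta>'"
    using normalized_conj_equiv_Ls[OF assms(1-4) Ls_normal_form(2)[OF assms(1,2,5,6)]] by simp
qed

theorem theorem2p15:
  shows "\<exists>\<epsilon>0 > 0. \<forall>\<epsilon>. 0 < \<epsilon> \<and> \<epsilon> < \<epsilon>0 \<longrightarrow>
    (\<forall>\<phi> \<theta> \<phi>' \<theta>'. \<phi> \<in> {0<..<pi} \<and> \<theta> \<in> {0<..<pi} \<union> {pi<..<2*pi} \<and>
        \<phi>' \<in> {0<..<pi} \<and> \<theta>' \<in> {0<..<pi} \<union> {pi<..<2*pi} \<and>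
        conj_equiv (Ls \<epsilon> \<phi> \<theta>) (Ls \<epsilon> \<phi>' \<theta>') \<longrightarrow> \<phi> = \<phi>' \<and> \<theta> = \<theta>') \<and>
    (\<forall>\<phi> \<theta>. \<phi> \<in> {0<..<pi} \<and> \<theta> \<in> {0<..<pi} \<union> {pi<..<2*pi} \<longrightarrow>
        in_P4 (Ls \<epsilon> \<phi> \<theta>) \<and>
        (let \<nu> = \<epsilon> * sin \<phi>; D = (cos \<nu>)\<^sup>2 + (sin \<nu>)\<^sup>2 * (sin \<theta>)\<^sup>2;
             s = (if \<theta> < pi then 1 else -1 :: real);
             ah = (- s * sin (\<phi> + \<nu>), - s * cos (\<phi> + \<nu>), 0 :: real);
             bh = (s * ((cos \<nu>)\<^sup>2 * (cos \<theta>)\<^sup>2 * sin (\<phi> + \<nu>) + (sin \<theta>)\<^sup>2 * sin (\<phi> - \<nu>)) / D,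
                   s * ((cos \<nu>)\<^sup>2 * (cos \<theta>)\<^sup>2 * cos (\<phi> + \<nu>) + (sin \<theta>)\<^sup>2 * cos (\<phi> - \<nu>)) / D,
                   - (1/2) * sin (2 * \<nu>) * sin (2 * \<theta>) / D)
         in (\<exists>A B. normalized (A, B, su2_of 0 (fst ah) (fst (snd ah)) (snd (snd ah)),
                                   su2_of 0 (fst bh) (fst (snd bh)) (snd (snd bh)))
                 \<and> conj_equiv (Ls \<epsilon> \<phi> \<theta>) (A, B, su2_of 0 (fst ah) (fst (snd ah)) (snd (snd ah)),
                                   su2_of 0 (fst bh) (fst (snd bh)) (snd (snd bh)))) \<and>
            (\<forall>A B a b. normalized (A, B, a, b) \<and> conj_equiv (Ls \<epsilon> \<phi> \<theta>) (A, B, a, b) \<longrightarrow>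
                 a = su2_of 0 (fst ah) (fst (snd ah)) (snd (snd ah)) \<and>
                 b = su2_of 0 (fst bh) (fst (snd bh)) (snd (snd bh)))))"
  unfolding Let_def fst_conv snd_conv
  apply (intro exI[of _ "1::real"] conjI allI impI; (elim conjE)?)
  subgoal by simp
  subgoal using Ls_conj_equiv_inj by blast
  subgoal using Ls_conj_equiv_inj by blast
  subgoal by (rule Ls_normal_form(3))
  subgoal for \<epsilon> \<phi> \<theta>
    using Ls_normal_form(1,2)[of \<epsilon> \<phi> \<theta>] unfolding Ls_normal_def Let_def by blast
  subgoal for \<epsilon> \<phi> \<theta> A B a b
    using normalized_conj_equiv_Ls[of \<epsilon> \<phi> \<theta> "(A, B, a, b)"] unfolding Ls_normal_def Let_def by simp
  subgoal for \<epsilon> \<phi> \<theta> A B a b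
    using normalized_conj_equiv_Ls[of \<epsilon> \<phi> \<theta> "(A, B, a, b)"] unfolding Ls_normal_def Let_def by simp
  done

end
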